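(* Let $T$ be RC-viable with respect to $S$. Then one of the following holds: (i) there is an edge $(u,v)$ of $T_{H(S)}$, with $v$ the parent of $u$, that satisfies the reaching criterion; or (ii) $T$ is recursively self-sufficient; in particular $V$ can be partitioned into subtrees $Q_s$, $s\in S$, with $s\in Q_s$ and $f(Q_s,s)\le\mathcal{T}$.
   Context: Let $T_{\mathrm{in}}=(V_{\mathrm{in}},E_{\mathrm{in}})$ be a finite tree; subtrees are identified with their vertex sets. $f:2^{V_{\mathrm{in}}}\times V_{\mathrm{in}}\to[0,+\infty]$ is minmax monotone: (1) $f(\{s\},s)=0$, and $f(U,s)=+\infty$ if $U$ is not a subtree or $s\notin U$; (2) $s\in U_1\subseteq U_2\Rightarrow f(U_1,s)\le f(U_2,s)$; (3) if $U$ is a subtree, $s\notin U$, and $s$ is adjacent to $u\in U$, then $f(U\cup\{s\},s)\ge f(U,u)$; (4) if $U$ is a subtree, $s\in U$, and $U_1,\dots,U_t$ are the vertex sets of the components of the tree induced by $U$ minus $s$, then $f(U,s)=\max_i f(U_i\cup\{s\},s)$. Fix $\mathcal{T}\ge0$. $T=(V,E)$ is a subtree of $T_{\mathrm{in}}$ and $S\subseteq V$ a set of leaves of $T$ with $|S|\ge2$, $|V|>2$. For an edge $(u,v)$, $T_{-v}(u)$ is the component of $T-v$ containing $u$, with vertex set $V_{-v}(u)$. Hub tree: $V_{H(S)}$ is the union of the vertex sets of the paths in $T$ between all pairs of sinks in $S$; $T_{H(S)}$ is the subtree induced by $V_{H(S)}$, and $T$ is rooted at a non-sink vertex $r\in V_{H(S)}$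 such that at least two of the components of $T-r$ contain sinks; for $w\in V$, $T(w)=(V(w),E(w))$ is the subtree consisting of $w$ and its descendants (so $T(r)=T$). If $w\in V_{H(S)}$ and $\eta\notin V_{H(S)}$ is a neighbour of $w$, then $T_{-w}(\eta)$ is an outstanding branch attached to $w$. $T$ is RC-viable with respect to $S$ if for every outstanding branch with vertex set $V'$ attached to $w\in V_{H(S)}$, $f(V'\cup\{w\},w)\le\mathcal{T}$. $\mathrm{BP}(a,a)$, for $a\in V_{H(S)}$, is $a$ together with the vertices of all outstanding branches attached to $a$. A subtree $T'$ with vertex set $V'$ is self-sufficient if $V'$ can be partitioned into subtrees $Q_s$, $s\in S\cap V'$, with $s\in Q_s$ and $f(Q_s,s)\le\mathcal{T}$. $T(v)$ ($v\in V_{H(S)}$) is recursively self-sufficient if $T(w)$ is self-sufficient for every $w\in V_{H(S)}\cap V(v)$; $T$ is recursively self-sufficient if $T(r)$ is. The ordered pair $(u,v)\in V_{H(S)}\times V_{H(S)}$ satisfies the reaching criterion if $v$ is the parent of $u$ in $T_{H(S)}$, $T_{-v}(u)$ is self-sufficient, and the subtree induced by $\mathrm{BP}(v,v)\cup V_{-v}(u)$ is not self-sufficient. *)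

theory Defs
  imports "HOL-Library.Extended_Nonnegative_Real"
begin

definition connected_in :: "('v \<times> 'v) set \<Rightarrow> 'v set \<Rightarrow> bool" where
  "connected_in E W \<longleftrightarrow> (\<forall>x\<in>W. \<forall>y\<in>W. (x, y) \<in> (E \<inter> W \<times> W)\<^sup>*)"

definition is_tree :: "'v set \<Rightarrow> ('v \<times> 'v) set \<Rightarrow> bool" where
  "is_tree V E \<longleftrightarrow> finite V \<and> V \<noteq> {} \<and> E \<subseteq> V \<times> V \<and> sym E \<and> (\<forall>x. (x, x) \<notin> E)
     \<and> connected_in E V
     \<and> (\<forall>x y. (x, y) \<in> E \<longrightarrow> (x, y) \<notin> (E - {(x, y), (y, x)})\<^sup>*)"

text \<open>Subtrees of the input tree are identified with their vertex sets: nonempty vertex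
  sets inducing a connected subgraph.\<close>
definition is_subtree :: "'v set \<Rightarrow> ('v \<times> 'v) set \<Rightarrow> 'v set \<Rightarrow> bool" where
  "is_subtree Vin Ein U \<longleftrightarrow> U \<noteq> {} \<and> U \<subseteq> Vin \<and> connected_in Ein U"

definition comp_of :: "('v \<times> 'v) set \<Rightarrow> 'v set \<Rightarrow> 'v \<Rightarrow> 'v set" where
  "comp_of E W x = {y \<in> W. (x, y) \<in> (E \<inter> W \<times> W)\<^sup>*}"

definition components :: "('v \<times> 'v) set \<Rightarrow> 'v set \<Rightarrow> 'v set set" where
  "components E W = (comp_of E W) ` W"

definition is_path :: "'v set \<Rightarrow> ('v \<times> 'v) set \<Rightarrow> 'v list \<Rightarrow> 'v \<Rightarrow> 'v \<Rightarrow> bool" where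
  "is_path V E p a b \<longleftrightarrow> p \<noteq> [] \<and> hd p = a \<and> last p = b \<and> distinct p \<and> set p \<subseteq> V
     \<and> successively (\<lambda>x y. (x, y) \<in> E) p"

definition minmax_monotone ::
  "'v set \<Rightarrow> ('v \<times> 'v) set \<Rightarrow> ('v set \<Rightarrow> 'v \<Rightarrow> ennreal) \<Rightarrow> bool" where
  "minmax_monotone Vin Ein f \<longleftrightarrow>
     (\<forall>s\<in>Vin. f {s} s = 0)
   \<and> (\<forall>U. \<forall>s\<in>Vin. U \<subseteq> Vin \<longrightarrow> (\<not> is_subtree Vin Ein U \<or> s \<notin> U) \<longrightarrow> f U s = \<infinity>)
   \<and> (\<forall>U1 U2 s. U2 \<subseteq> Vin \<longrightarrow> is_subtree Vin Ein U1 \<longrightarrow> s \<in> U1 \<longrightarrow> U1 \<subseteq> U2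
        \<longrightarrow> f U1 s \<le> f U2 s)
   \<and> (\<forall>U s u. is_subtree Vin Ein U \<longrightarrow> s \<in> Vin \<longrightarrow> s \<notin> U \<longrightarrow> u \<in> U \<longrightarrow> (s, u) \<in> Ein
        \<longrightarrow> f (U \<union> {s}) s \<ge> f U u)
   \<and> (\<forall>U s. is_subtree Vin Ein U \<longrightarrow> s \<in> U
        \<longrightarrow> f U s = (SUP C \<in> components Ein (U - {s}). f (C \<union> {s}) s))"

definition is_leaf :: "('v \<times> 'v) set \<Rightarrow> 'v set \<Rightarrow> 'v \<Rightarrow> bool" where
  "is_leaf Ein V s \<longleftrightarrow> s \<in> V \<and> card {w \<in> V. (s, w) \<in> Ein} = 1"

definition hub :: "('v \<times> 'v) set \<Rightarrow> 'v set \<Rightarrow> 'v set \<Rightarrow> 'v set" where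
  "hub Ein V S = {x. \<exists>s\<in>S. \<exists>s'\<in>S. \<exists>p. is_path V Ein p s s' \<and> x \<in> set p}"

text \<open>Vertex set of T(w) when T is rooted at r: w and its descendants.\<close>
definition desc :: "('v \<times> 'v) set \<Rightarrow> 'v set \<Rightarrow> 'v \<Rightarrow> 'v \<Rightarrow> 'v set" where
  "desc Ein V r w = {x \<in> V. \<exists>p. is_path V Ein p r x \<and> w \<in> set p}"

definition is_parent :: "('v \<times> 'v) set \<Rightarrow> 'v set \<Rightarrow> 'v \<Rightarrow> 'v \<Rightarrow> 'v \<Rightarrow> bool" where
  "is_parent Ein V r u v \<longleftrightarrow> u \<in> V \<and> v \<in> V \<and> (u, v) \<in> Ein \<and> u \<in> desc Ein V r v"

definition valid_root :: "('v \<times> 'v) set \<Rightarrow> 'v set \<Rightarrow> 'v set \<Rightarrow> 'v \<Rightarrow> bool" where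
  "valid_root Ein V S r \<longleftrightarrow> r \<in> hub Ein V S \<and> r \<notin> S
     \<and> (\<exists>C1\<in>components Ein (V - {r}). \<exists>C2\<in>components Ein (V - {r}).
          C1 \<noteq> C2 \<and> C1 \<inter> S \<noteq> {} \<and> C2 \<inter> S \<noteq> {})"

definition RC_viable ::
  "('v \<times> 'v) set \<Rightarrow> ('v set \<Rightarrow> 'v \<Rightarrow> ennreal) \<Rightarrow> real \<Rightarrow> 'v set \<Rightarrow> 'v set \<Rightarrow> bool" where
  "RC_viable Ein f \<T> V S \<longleftrightarrow>
     (\<forall>w\<in>hub Ein V S. \<forall>\<eta>\<in>V. (w, \<eta>) \<in> Ein \<longrightarrow> \<eta> \<notin> hub Ein V S
        \<longrightarrow> f (comp_of Ein (V - {w}) \<eta> \<union> {w}) w \<le> ennreal \<T>)"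

definition BP :: "('v \<times> 'v) set \<Rightarrow> 'v set \<Rightarrow> 'v set \<Rightarrow> 'v \<Rightarrow> 'v set" where
  "BP Ein V S a = {a} \<union> \<Union> {comp_of Ein (V - {a}) \<eta> | \<eta>. \<eta> \<in> V \<and> (a, \<eta>) \<in> Ein \<and> \<eta> \<notin> hub Ein V S}"

definition self_sufficient ::
  "'v set \<Rightarrow> ('v \<times> 'v) set \<Rightarrow> ('v set \<Rightarrow> 'v \<Rightarrow> ennreal) \<Rightarrow> real \<Rightarrow> 'v set \<Rightarrow> 'v set \<Rightarrow> bool" where
  "self_sufficient Vin Ein f \<T> S V' \<longleftrightarrow>
     (\<exists>Q :: 'v \<Rightarrow> 'v set.
        (\<forall>s\<in>S \<inter> V'. is_subtree Vin Ein (Q s) \<and> s \<in> Q s \<and> f (Q s) s \<le> ennreal \<T>)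
      \<and> (\<Union>s\<in>S \<inter> V'. Q s) = V'
      \<and> (\<forall>s\<in>S \<inter> V'. \<forall>s'\<in>S \<inter> V'. s \<noteq> s' \<longrightarrow> Q s \<inter> Q s' = {}))"

definition rec_self_sufficient ::
  "'v set \<Rightarrow> ('v \<times> 'v) set \<Rightarrow> ('v set \<Rightarrow> 'v \<Rightarrow> ennreal) \<Rightarrow> real \<Rightarrow> 'v set \<Rightarrow> 'v set
     \<Rightarrow> 'v \<Rightarrow> 'v \<Rightarrow> bool" where
  "rec_self_sufficient Vin Ein f \<T> V S r v \<longleftrightarrow>
     (\<forall>w \<in> hub Ein V S \<inter> desc Ein V r v. self_sufficient Vin Ein f \<T> S (desc Ein V r w))"

definition reaching_criterion ::
  "'v set \<Rightarrow> ('v \<times> 'v) set \<Rightarrow> ('v set \<Rightarrow> 'v \<Rightarrow> ennreal) \<Rightarrow> real \<Rightarrow> 'v set \<Rightarrow> 'v set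
     \<Rightarrow> 'v \<Rightarrow> 'v \<Rightarrow> 'v \<Rightarrow> bool" where
  "reaching_criterion Vin Ein f \<T> V S r u v \<longleftrightarrow>
     u \<in> hub Ein V S \<and> v \<in> hub Ein V S \<and> is_parent Ein V r u v
     \<and> self_sufficient Vin Ein f \<T> S (comp_of Ein (V - {v}) u)
     \<and> \<not> self_sufficient Vin Ein f \<T> S (BP Ein V S v \<union> comp_of Ein (V - {v}) u)"

end

theory Submission
  imports Defs
begin

text \<open>Suppose no hub edge satisfies the reaching criterion. We show by induction on the size of
  T(w), for every hub vertex w, that T(w) is self-sufficient. For a sink, T(s) = {s}. Otherwise
  T(w) splits into BP(w,w) and the components T(u) of its hub children u. Each T(u) is
  self-sufficient by induction; fixing one hub child u0, the failure of the reaching criterion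
  for (u0, w) makes BP(w,w) \<union> T(u0) self-sufficient as well, and the allocations of these
  disjoint pieces combine.\<close>

abbreviation reach :: "('v \<times> 'v) set \<Rightarrow> 'v set \<Rightarrow> 'v \<Rightarrow> 'v \<Rightarrow> bool" where
  "reach E W a b \<equiv> (a, b) \<in> (E \<inter> W \<times> W)\<^sup>*"

lemma reach_walk:
  assumes "successively (\<lambda>x y. (x, y) \<in> E) p" "p \<noteq> []" "set p \<subseteq> W"
  shows "reach E W (hd p) (last p)"
  using assms
proof (induction p)
  case Nil then show ?case by simp
next
  case (Cons x xs)
  show ?case
  proof (cases xs)
    case Nil then show ?thesis by simp
  next
    case (Cons y ys)
    have "reach E W y (last xs)" using Cons.IH Cons.prems Cons by (auto simp: successively_Cons)
    moreover have "(x, y) \<in> E \<inter> W \<times> W" using Cons.prems Cons by auto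
    ultimately show ?thesis using Cons by (auto intro: converse_rtrancl_into_rtrancl)
  qed
qed

lemma path_imp_reach: "is_path W E p a b \<Longrightarrow> set p \<subseteq> W' \<Longrightarrow> reach E W' a b"
  unfolding is_path_def using reach_walk[of E p W'] by auto

lemma reach_imp_path:
  assumes "reach E W a b" "a \<in> W"
  shows "\<exists>p. is_path W E p a b"
  using assms(1)
proof (induction rule: rtrancl_induct)
  case base then show ?case using assms(2) by (intro exI[of _ "[a]"]) (auto simp: is_path_def)
next
  case (step y z)
  then obtain p where p: "is_path W E p a y" by blast
  show ?case
  proof (cases "z \<in> set p")
    case True
    then obtain xs ys where xs: "p = xs @ z # ys" by (meson split_list)
    have "is_path W E (xs @ [z]) a z"
      using p xs unfolding is_path_def by (cases "xs = []") (auto simp: successively_append_iff)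
    then show ?thesis by blast
  next
    case False
    have "is_path W E (p @ [z]) a z"
      using p step(2) False unfolding is_path_def by (auto simp: successively_append_iff)
    then show ?thesis by blast
  qed
qed

lemma reach_sym: "sym E \<Longrightarrow> reach E W a b \<Longrightarrow> reach E W b a"
proof -
  assume "sym E" "reach E W a b"
  moreover from \<open>sym E\<close> have "sym (E \<inter> W \<times> W)" by (auto simp: sym_def)
  ultimately show ?thesis by (meson sym_rtrancl symD)
qed

lemma connected_imp_path:
  "connected_in E W \<Longrightarrow> a \<in> W \<Longrightarrow> b \<in> W \<Longrightarrow> \<exists>p. is_path W E p a b"
  unfolding connected_in_def by (intro reach_imp_path) simp_all

lemma path_suffix_reach:
  assumes p: "is_path W E p a b" and y: "y \<in> set p" "y \<noteq> a"
  shows "reach E (W - {a}) y b"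
proof -
  obtain xs ys where p_eq: "p = xs @ y # ys" using y(1) by (meson split_list)
  have "xs \<noteq> []" using p p_eq y(2) by (auto simp: is_path_def)
  then have "a \<in> set xs" using p p_eq by (auto simp: is_path_def)
  then have "set (y # ys) \<subseteq> W - {a}" using p p_eq by (auto simp: is_path_def)
  moreover have "successively (\<lambda>x y. (x, y) \<in> E) (y # ys)"
    using p p_eq by (auto simp: is_path_def successively_append_iff)
  moreover have "last (y # ys) = b" using p p_eq by (auto simp: is_path_def)
  ultimately show ?thesis using reach_walk[of E "y # ys" "W - {a}"] by auto
qed

lemma path_prefix_reach:
  assumes p: "is_path W E p a b" and y: "y \<in> set p" "y \<noteq> b"
  shows "reach E (W - {b}) a y"
proof -
  obtain xs ys where p_eq: "p = xs @ y # ys" using y(1) by (meson split_list)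
  have "ys \<noteq> []" using p p_eq y(2) by (auto simp: is_path_def)
  then have "b \<in> set ys" using p p_eq by (auto simp: is_path_def)
  then have "set (xs @ [y]) \<subseteq> W - {b}" using p p_eq by (auto simp: is_path_def)
  moreover have "successively (\<lambda>x y. (x, y) \<in> E) (xs @ [y])"
    using p p_eq by (auto simp: is_path_def successively_append_iff)
  moreover have "hd (xs @ [y]) = a" using p p_eq by (cases xs) (auto simp: is_path_def)
  ultimately show ?thesis using reach_walk[of E "xs @ [y]" "W - {b}"] by auto
qed

lemma unreachable_imp_path_through:
  assumes "connected_in E W" "a \<in> W" "b \<in> W" "\<not> reach E (W - {x}) a b"
  shows "\<exists>p. is_path W E p a b \<and> x \<in> set p"
proof -
  obtain p where p: "is_path W E p a b" using connected_imp_path[OF assms(1-3)] by blast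
  have "x \<in> set p"
  proof (rule ccontr)
    assume "x \<notin> set p"
    then have "set p \<subseteq> W - {x}" using p by (auto simp: is_path_def)
    then show False using path_imp_reach[OF p] assms(4) by blast
  qed
  with p show ?thesis by blast
qed

lemma first_step_towards:
  assumes "connected_in E W" "w \<in> W" "x \<in> W - {w}"
  shows "\<exists>e. e \<in> W - {w} \<and> (w, e) \<in> E \<and> reach E (W - {w}) e x"
proof -
  obtain p where p: "is_path W E p w x" using connected_imp_path[OF assms(1,2)] assms(3) by blast
  obtain q where q: "p = w # q" using p by (cases p) (auto simp: is_path_def)
  have "q \<noteq> []" using p q assms(3) by (auto simp: is_path_def)
  moreover have "set q \<subseteq> W - {w}" using p q by (auto simp: is_path_def)
  moreover have "successively (\<lambda>x y. (x, y) \<in> E) q" "(w, hd q) \<in> E" "last q = x"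
    using p q \<open>q \<noteq> []\<close> by (auto simp: is_path_def successively_Cons)
  moreover have "hd q \<in> set q" using \<open>q \<noteq> []\<close> by simp
  ultimately show ?thesis using reach_walk[of E q "W - {w}"] by (intro exI[of _ "hd q"]) blast
qed

text \<open>A detour around y would close a cycle with the edge of the path entering y.\<close>
lemma tree_path_inner_vertex_separates:
  assumes tree: "is_tree Vin E" and W: "W \<subseteq> Vin"
    and p: "is_path W E p a b" and y: "y \<in> set p" "y \<noteq> a" "y \<noteq> b"
  shows "\<not> reach E (W - {y}) a b"
proof
  assume ab: "reach E (W - {y}) a b"
  have symE: "sym E" using tree by (simp add: is_tree_def)
  obtain xs ys where p_eq: "p = xs @ y # ys" using y(1) by (meson split_list)
  have xs: "xs \<noteq> []" and ys: "ys \<noteq> []" using p p_eq y(2,3) by (auto simp: is_path_def)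
  define c where "c = last xs"
  define d where "d = hd ys"
  have dist: "distinct p" "set p \<subseteq> W" using p by (auto simp: is_path_def)
  have succ: "successively (\<lambda>x y. (x, y) \<in> E) xs" "successively (\<lambda>x y. (x, y) \<in> E) ys"
    "(c, y) \<in> E" "(y, d) \<in> E"
    using p p_eq xs ys unfolding is_path_def c_def d_def
    by (auto simp: successively_append_iff successively_Cons)
  have xsW: "set xs \<subseteq> W - {y}" and ysW: "set ys \<subseteq> W - {y}" using dist p_eq by auto
  have "c \<in> set xs" "d \<in> set ys" using xs ys unfolding c_def d_def by auto
  moreover have "set xs \<inter> set ys = {}" using dist(1) p_eq by auto
  ultimately have cd: "c \<noteq> d" by blast
  have "hd xs = a" "last ys = b" using p p_eq xs ys by (auto simp: is_path_def)
  then have "reach E (W - {y}) c a" "reach E (W - {y}) b d"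
    using reach_sym[OF symE reach_walk[OF succ(1) xs xsW]]
      reach_sym[OF symE reach_walk[OF succ(2) ys ysW]] c_def d_def by simp_all
  with ab have "(c, d) \<in> (E \<inter> (W - {y}) \<times> (W - {y}))\<^sup>*" by (meson rtrancl_trans)
  moreover have "E \<inter> (W - {y}) \<times> (W - {y}) \<subseteq> E - {(c, y), (y, c)}" by auto
  ultimately have "(c, d) \<in> (E - {(c, y), (y, c)})\<^sup>*" using rtrancl_mono by blast
  moreover have "(d, y) \<in> E - {(c, y), (y, c)}" using succ(4) symE cd by (auto simp: sym_def)
  ultimately have "(c, y) \<in> (E - {(c, y), (y, c)})\<^sup>*" by (meson rtrancl.rtrancl_into_rtrancl)
  then show False using tree succ(3) unfolding is_tree_def by blast
qed

lemma tree_neighbours_separated: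
  assumes tree: "is_tree Vin E" and W: "W \<subseteq> Vin" and w: "w \<in> W"
    and e: "e \<in> W - {w}" "e' \<in> W - {w}" "(w, e) \<in> E" "(w, e') \<in> E"
    and reach: "reach E (W - {w}) e e'"
  shows "e = e'"
proof (rule ccontr)
  assume "e \<noteq> e'"
  with e w tree have "is_path W E [e, w, e'] e e'" by (auto simp: is_path_def is_tree_def sym_def)
  from tree_path_inner_vertex_separates[OF tree W this] reach e show False by auto
qed

lemma tree_path_through_neighbour:
  assumes tree: "is_tree Vin E" and W: "W \<subseteq> Vin"
    and p: "is_path W E p x y" and w: "w \<in> set p" "w \<noteq> x"
    and e: "e \<in> W - {w}" "(w, e) \<in> E" and reach: "reach E (W - {w}) e x"
  shows "e \<in> set p"
proof -
  obtain xs ys where p_eq: "p = xs @ w # ys" using w(1) by (meson split_list)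
  have xs: "xs \<noteq> []" using p p_eq w(2) by (auto simp: is_path_def)
  have xsW: "set xs \<subseteq> W - {w}" and wW: "w \<in> W" using p p_eq by (auto simp: is_path_def)
  have succ: "successively (\<lambda>x y. (x, y) \<in> E) xs" "(last xs, w) \<in> E"
    using p p_eq xs by (auto simp: is_path_def successively_append_iff)
  have "hd xs = x" using p p_eq xs by (auto simp: is_path_def)
  then have "reach E (W - {w}) e (last xs)" using reach reach_walk[OF succ(1) xs xsW] by auto
  moreover have "last xs \<in> W - {w}" using xs xsW last_in_set by blast
  moreover have "(w, last xs) \<in> E" using succ(2) tree by (auto simp: is_tree_def sym_def)
  ultimately have "e = last xs" using tree_neighbours_separated[OF tree W wW] e by blast
  then show ?thesis using xs p_eq by auto
qed

locale rooted_sink_tree =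
  fixes Vin :: "'v set" and Ein :: "('v \<times> 'v) set" and V S :: "'v set" and r :: 'v
  assumes tree: "is_tree Vin Ein"
    and sub: "is_subtree Vin Ein V"
    and leaves: "\<forall>s\<in>S. is_leaf Ein V s"
    and root: "valid_root Ein V S r"
begin

text \<open>In the paper's notation: D w is V(w), cmp w x is V_{-w}(x), H is V_{H(S)}, and R w is
  reachability in T - w.\<close>
abbreviation "D w \<equiv> desc Ein V r w"
abbreviation "cmp w x \<equiv> comp_of Ein (V - {w}) x"
abbreviation "H \<equiv> hub Ein V S"
abbreviation "R w a b \<equiv> reach Ein (V - {w}) a b"

lemma V_sub: "V \<subseteq> Vin" and V_conn: "connected_in Ein V"
  using sub by (simp_all add: is_subtree_def)
lemma sym_Ein: "sym Ein" and irrefl_Ein: "(x, x) \<notin> Ein"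
  using tree by (simp_all add: is_tree_def)
lemma finite_V: "finite V" using tree V_sub finite_subset by (auto simp: is_tree_def)
lemma S_sub: "S \<subseteq> V" using leaves by (auto simp: is_leaf_def)
lemma H_sub: "H \<subseteq> V" by (auto simp: hub_def is_path_def)
lemma root_hub: "r \<in> H" and root_not_sink: "r \<notin> S" using root by (auto simp: valid_root_def)
lemma root_in: "r \<in> V" using root_hub H_sub by auto

lemma R_sym: "R w a b \<Longrightarrow> R w b a" using reach_sym[OF sym_Ein] by blast
lemma R_trans: "R w a b \<Longrightarrow> R w b c \<Longrightarrow> R w a c" by (rule rtrancl_trans)
lemma R_join: "R w a c \<Longrightarrow> R w b c \<Longrightarrow> R w a b" using R_trans R_sym by blast

lemma cmp_iff: "x \<in> cmp w a \<longleftrightarrow> x \<in> V - {w} \<and> R w a x"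
  by (simp add: comp_of_def)

lemma desc_iff:
  assumes w: "w \<in> V"
  shows "x \<in> D w \<longleftrightarrow> x \<in> V \<and> (x = w \<or> w = r \<or> \<not> R w r x)"
proof
  assume "x \<in> D w"
  then obtain p where x: "x \<in> V" and p: "is_path V Ein p r x" "w \<in> set p"
    by (auto simp: desc_def)
  have "\<not> R w r x" if "w \<noteq> r" "w \<noteq> x"
    using tree_path_inner_vertex_separates[OF tree V_sub p] that by simp
  with x show "x \<in> V \<and> (x = w \<or> w = r \<or> \<not> R w r x)" by blast
next
  assume x: "x \<in> V \<and> (x = w \<or> w = r \<or> \<not> R w r x)"
  obtain p where "is_path V Ein p r x" "w \<in> set p"
  proof (cases "x = w \<or> w = r")
    case True
    obtain p where p: "is_path V Ein p r x" using connected_imp_path[OF V_conn root_in] x by blast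
    then have "r \<in> set p" "x \<in> set p" unfolding is_path_def by auto
    with True p that show ?thesis by auto
  next
    case False
    then have "\<not> R w r x" using x by simp
    then show ?thesis using unreachable_imp_path_through[OF V_conn root_in] x that by blast
  qed
  with x show "x \<in> D w" unfolding desc_def by auto
qed

lemma desc_root: "D r = V"
  using desc_iff[OF root_in] by blast

lemma desc_sink:
  assumes s: "s \<in> S" shows "D s = {s}"
proof -
  have sV: "s \<in> V" and sr: "s \<noteq> r" using s S_sub root_not_sink by auto
  have "x = s" if x: "x \<in> V" "\<not> R s r x" for x
  proof (rule ccontr)
    assume "x \<noteq> s"
    then obtain e where e: "e \<in> V - {s}" "(s, e) \<in> Ein" "R s e x"
      using first_step_towards[OF V_conn sV] x by blast
    obtain e' where e': "e' \<in> V - {s}" "(s, e') \<in> Ein" "R s e' r"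
      using first_step_towards[OF V_conn sV] root_in sr by blast
    have "card {w \<in> V. (s, w) \<in> Ein} = 1" using leaves s by (auto simp: is_leaf_def)
    then obtain z where "{w \<in> V. (s, w) \<in> Ein} = {z}" by (meson card_1_singletonE)
    moreover have "e \<in> {w \<in> V. (s, w) \<in> Ein}" "e' \<in> {w \<in> V. (s, w) \<in> Ein}" using e e' by auto
    ultimately have "e = e'" by simp
    then have "R s r x" using R_trans[OF R_sym[OF e'(3)]] e(3) by simp
    with x show False by simp
  qed
  then show ?thesis using desc_iff[OF sV] sV sr by auto
qed

lemma hub_separates_sinks:
  assumes "w \<in> H" "w \<notin> S"
  shows "\<exists>s\<in>S. \<exists>s'\<in>S. s \<noteq> w \<and> s' \<noteq> w \<and> \<not> R w s s'"
proof -
  obtain s s' p where s: "s \<in> S" "s' \<in> S" and p: "is_path V Ein p s s'" "w \<in> set p"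
    using assms(1) by (auto simp: hub_def)
  moreover have "s \<noteq> w" "s' \<noteq> w" using s assms(2) by auto
  ultimately show ?thesis using tree_path_inner_vertex_separates[OF tree V_sub p] by blast
qed

lemma root_side_has_sink:
  assumes w: "w \<in> V" "w \<noteq> r"
  shows "\<exists>t\<in>S. R w r t"
proof (rule ccontr)
  assume none: "\<not> ?thesis"
  obtain t1 t2 where t: "t1 \<in> S" "t2 \<in> S" "\<not> R r t1 t2"
    using hub_separates_sinks[OF root_hub root_not_sink] by blast
  have "R r w t" if t: "t \<in> S" for t
  proof -
    have "\<not> R w r t" using none t by blast
    then obtain p where "is_path V Ein p r t" "w \<in> set p"
      using unreachable_imp_path_through[OF V_conn root_in] t S_sub by blast
    then show ?thesis using path_suffix_reach w(2) by fast
  qed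
  then have "R r t1 t2" using R_trans[OF R_sym] t(1,2) by blast
  with t(3) show False ..
qed

text \<open>A sink beyond \<eta> and a sink separated from it by w would be joined by a path through w
  and \<eta>, putting \<eta> into the hub.\<close>
lemma outstanding_branch_sink_free:
  assumes w: "w \<in> H" "w \<notin> S"
    and \<eta>: "\<eta> \<in> V - {w}" "(w, \<eta>) \<in> Ein" "\<eta> \<notin> H" and t: "t \<in> S"
  shows "\<not> R w \<eta> t"
proof
  assume \<eta>t: "R w \<eta> t"
  obtain s s' where ss: "s \<in> S" "s' \<in> S" "\<not> R w s s'"
    using hub_separates_sinks[OF w] by blast
  have "\<not> R w t s \<or> \<not> R w t s'"
    using R_trans[OF R_sym] ss(3) by blast
  then obtain s0 where s0: "s0 \<in> S" "\<not> R w t s0" using ss(1,2) by blast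
  obtain p where p: "is_path V Ein p t s0" "w \<in> set p"
    using unreachable_imp_path_through[OF V_conn] s0 t S_sub by blast
  have "\<eta> \<in> set p"
    using tree_path_through_neighbour[OF tree V_sub p(1) p(2) _ \<eta>(1,2)] \<eta>t R_sym t w(2) by blast
  with p t s0 \<eta>(3) show False by (auto simp: hub_def)
qed

definition hub_children :: "'v \<Rightarrow> 'v set" where
  "hub_children w = {u \<in> H. (u, w) \<in> Ein \<and> u \<in> D w}"

lemma hub_child_parent: "u \<in> hub_children w \<Longrightarrow> w \<in> V \<Longrightarrow> is_parent Ein V r u w"
  using H_sub by (auto simp: hub_children_def is_parent_def)

lemma hub_childD:
  assumes w: "w \<in> V" and u: "u \<in> hub_children w"
  shows "u \<in> V - {w}" "(w, u) \<in> Ein" "u \<in> H" "w = r \<or> \<not> R w r u"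
proof -
  have u': "u \<in> H" "(u, w) \<in> Ein" "u \<in> D w" using u by (auto simp: hub_children_def)
  then show "u \<in> V - {w}" "u \<in> H" using irrefl_Ein H_sub by auto
  show "(w, u) \<in> Ein" using u' sym_Ein by (auto simp: sym_def)
  show "w = r \<or> \<not> R w r u" using u' desc_iff[OF w] irrefl_Ein by auto
qed

lemma hub_child_not_root:
  assumes w: "w \<in> V" and u: "u \<in> hub_children w" shows "u \<noteq> r"
proof
  assume "u = r"
  with hub_childD(2)[OF w u] irrefl_Ein have "w \<noteq> r" by auto
  with hub_childD(4)[OF w u] \<open>u = r\<close> show False by simp
qed

lemma hub_child_reaches_parent_side:
  assumes w: "w \<in> V" and u: "u \<in> hub_children w" shows "R u r w"
proof (cases "w = r")
  case False
  obtain p where p: "is_path V Ein p r w" using connected_imp_path[OF V_conn root_in w] by blast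
  have "u \<notin> set p"
  proof
    assume "u \<in> set p"
    then have "R w r u" using path_prefix_reach[OF p] hub_childD(1)[OF w u] by simp
    with False hub_childD(4)[OF w u] show False by simp
  qed
  then have "set p \<subseteq> V - {u}" using p by (auto simp: is_path_def)
  then show ?thesis using path_imp_reach[OF p] by simp
qed simp

lemma component_of_hub_child:
  assumes w: "w \<in> V" and u: "u \<in> hub_children w"
  shows "cmp w u = D u"
proof (intro set_eqI iffI)
  note u' = hub_childD[OF w u]
  have uV: "u \<in> V" using u' by auto
  note parent_side = hub_child_reaches_parent_side[OF w u]
  fix x
  show "x \<in> cmp w u" if x: "x \<in> D u"
  proof (cases "x = u")
    case False
    then have xV: "x \<in> V" and rx: "\<not> R u r x"
      using x desc_iff[OF uV] hub_child_not_root[OF w u] by auto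
    have wx: "\<not> R u w x"
    proof
      assume "R u w x"
      with rx show False using R_trans[OF parent_side] by simp
    qed
    have "x \<noteq> w"
    proof
      assume "x = w"
      with wx show False by simp
    qed
    obtain p where p: "is_path V Ein p w x" "u \<in> set p"
      using unreachable_imp_path_through[OF V_conn w xV wx] by blast
    have "u \<noteq> w" using u'(1) by simp
    then have "R w u x" using path_suffix_reach[OF p] by simp
    with xV \<open>x \<noteq> w\<close> show ?thesis by (simp add: cmp_iff)
  qed (use u' in \<open>simp add: cmp_iff\<close>)
  show "x \<in> D u" if x: "x \<in> cmp w u"
  proof (cases "x = u")
    case False
    from x have xV: "x \<in> V - {w}" and ux: "R w u x" by (auto simp: cmp_iff)
    obtain q where q: "is_path (V - {w}) Ein q u x" using reach_imp_path[OF ux] u'(1) by blast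
    with u'(1,2) w have wq: "is_path V Ein (w # q) w x" by (auto simp: is_path_def successively_Cons)
    moreover have "u \<in> set (w # q)" using q by (auto simp: is_path_def)
    moreover have "u \<noteq> w" using u'(1) by simp
    ultimately have "\<not> R u w x" using tree_path_inner_vertex_separates[OF tree V_sub] False by blast
    then have "\<not> R u r x" using R_trans[OF R_sym[OF parent_side]] by metis
    with xV show ?thesis using desc_iff[OF uV] by simp
  qed (use desc_iff[OF uV] uV in simp)
qed

lemma component_of_hub_child_subset:
  assumes w: "w \<in> V" and u: "u \<in> hub_children w"
  shows "cmp w u \<subseteq> D w - {w}"
proof
  fix x assume "x \<in> cmp w u"
  then have x: "x \<in> V - {w}" and ux: "R w u x" by (auto simp: cmp_iff)
  have "\<not> R w r x" if "w \<noteq> r"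
  proof
    assume "R w r x"
    then have "R w r u" using R_join ux by blast
    with that hub_childD(4)[OF w u] show False by simp
  qed
  with x show "x \<in> D w - {w}" using desc_iff[OF w] by auto
qed

lemma hub_children_nonempty:
  assumes w: "w \<in> H" "w \<notin> S"
  shows "hub_children w \<noteq> {}"
proof -
  have wV: "w \<in> V" using w H_sub by auto
  obtain s s' where ss: "s \<in> S" "s' \<in> S" "s \<noteq> w" "s' \<noteq> w" "\<not> R w s s'"
    using hub_separates_sinks[OF w] by blast
  \<comment> \<open>the root cannot reach both separated sinks avoiding w, so one of them lies below w\<close>
  obtain s0 s1 where s01: "s0 \<in> S" "s1 \<in> S" "s0 \<noteq> w" "\<not> R w s0 s1" "w = r \<or> \<not> R w r s0"
  proof (cases "w = r \<or> \<not> R w r s")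
    case True then show ?thesis using that ss by blast
  next
    case False
    then have "\<not> R w r s'" using ss(5) R_trans R_sym by blast
    moreover have "\<not> R w s' s" using ss(5) R_sym by blast
    ultimately show ?thesis using that ss by blast
  qed
  have s0V: "s0 \<in> V" "s1 \<in> V" using s01 S_sub by auto
  obtain a where a: "a \<in> V - {w}" "(w, a) \<in> Ein" "R w a s0"
    using first_step_towards[OF V_conn wV] s0V s01(3) by blast
  obtain p where p: "is_path V Ein p s0 s1" "w \<in> set p"
    using unreachable_imp_path_through[OF V_conn s0V s01(4)] by blast
  have "a \<in> set p"
    using tree_path_through_neighbour[OF tree V_sub p(1) p(2) s01(3)[symmetric] a(1,2) a(3)] .
  with p s01 have "a \<in> H" by (auto simp: hub_def)
  moreover have "\<not> R w r a" if "w \<noteq> r"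
    using s01(5) that R_trans[OF _ a(3)] by blast
  then have "a \<in> D w" using desc_iff[OF wV] a(1) by auto
  ultimately have "a \<in> hub_children w" using a sym_Ein by (auto simp: hub_children_def sym_def)
  then show ?thesis by blast
qed

lemma BP_subset_desc:
  assumes w: "w \<in> H" "w \<notin> S"
  shows "BP Ein V S w \<subseteq> D w"
proof
  have wV: "w \<in> V" using w H_sub by auto
  fix x assume x: "x \<in> BP Ein V S w"
  show "x \<in> D w"
  proof (cases "x = w \<or> w = r")
    case True then show ?thesis using desc_iff[OF wV] wV x by (auto simp: BP_def comp_of_def)
  next
    case False
    then obtain \<eta> where \<eta>: "\<eta> \<in> V" "(w, \<eta>) \<in> Ein" "\<eta> \<notin> H" "x \<in> cmp w \<eta>"
      using x by (auto simp: BP_def)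
    have \<eta>x: "x \<in> V - {w}" "R w \<eta> x" using \<eta>(4) by (auto simp: cmp_iff)
    have "\<eta> \<in> V - {w}" using \<eta> irrefl_Ein by auto
    obtain t where t: "t \<in> S" "R w r t" using root_side_has_sink[OF wV] False by blast
    have "\<not> R w r x"
    proof
      assume "R w r x"
      then have "R w \<eta> t" using R_trans[OF \<eta>x(2) R_sym] t(2) R_trans by blast
      with outstanding_branch_sink_free[OF w \<open>\<eta> \<in> V - {w}\<close> \<eta>(2,3) t(1)] show False ..
    qed
    then show ?thesis using desc_iff[OF wV] \<eta>x by auto
  qed
qed

lemma desc_decomp:
  assumes w: "w \<in> H" "w \<notin> S"
  shows "D w = BP Ein V S w \<union> \<Union> (cmp w ` hub_children w)"
proof
  have wV: "w \<in> V" using w H_sub by auto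
  show "BP Ein V S w \<union> \<Union> (cmp w ` hub_children w) \<subseteq> D w"
    using BP_subset_desc[OF w] component_of_hub_child_subset[OF wV] by blast
  show "D w \<subseteq> BP Ein V S w \<union> \<Union> (cmp w ` hub_children w)"
  proof
    fix x assume x: "x \<in> D w"
    show "x \<in> BP Ein V S w \<union> \<Union> (cmp w ` hub_children w)"
    proof (cases "x = w")
      case True then show ?thesis by (auto simp: BP_def)
    next
      case False
      then have xV: "x \<in> V - {w}" "w = r \<or> \<not> R w r x" using x desc_iff[OF wV] by auto
      obtain e where e: "e \<in> V - {w}" "(w, e) \<in> Ein" "R w e x"
        using first_step_towards[OF V_conn wV xV(1)] by blast
      have "\<not> R w r e" if "w \<noteq> r" using xV(2) that R_trans[OF _ e(3)] by blast
      then have "e \<in> D w" using desc_iff[OF wV] e(1) by auto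
      moreover have "x \<in> cmp w e" using xV e by (auto simp: cmp_iff)
      ultimately show ?thesis
        using e sym_Ein by (cases "e \<in> H") (auto simp: BP_def hub_children_def sym_def)
    qed
  qed
qed

lemma components_of_hub_children_disjoint:
  assumes w: "w \<in> V" and u: "u \<in> hub_children w" "u' \<in> hub_children w" "u \<noteq> u'"
  shows "cmp w u \<inter> cmp w u' = {}"
proof (rule ccontr)
  assume "cmp w u \<inter> cmp w u' \<noteq> {}"
  then obtain x where "R w u x" "R w u' x" by (auto simp: cmp_iff)
  then have "R w u u'" by (rule R_join)
  with tree_neighbours_separated[OF tree V_sub w] hub_childD[OF w u(1)] hub_childD[OF w u(2)]
  have "u = u'" by blast
  with u(3) show False ..
qed

lemma BP_disjoint_component_of_hub_child:
  assumes w: "w \<in> V" and u: "u \<in> hub_children w"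
  shows "BP Ein V S w \<inter> cmp w u = {}"
proof (rule ccontr)
  assume "BP Ein V S w \<inter> cmp w u \<noteq> {}"
  then obtain x where x: "x \<in> BP Ein V S w" "x \<in> cmp w u" by blast
  then have "x \<noteq> w" by (auto simp: cmp_iff)
  then obtain \<eta> where \<eta>: "\<eta> \<in> V" "(w, \<eta>) \<in> Ein" "\<eta> \<notin> H" "x \<in> cmp w \<eta>"
    using x(1) by (auto simp: BP_def)
  have "R w \<eta> x" "R w u x" using \<eta>(4) x(2) by (auto simp: cmp_iff)
  then have "R w \<eta> u" by (rule R_join)
  moreover have "\<eta> \<in> V - {w}" using \<eta> irrefl_Ein by auto
  ultimately have "\<eta> = u"
    using tree_neighbours_separated[OF tree V_sub w] hub_childD[OF w u] \<eta>(2) by blast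
  with \<eta>(3) hub_childD[OF w u] show False by simp
qed

lemma desc_partition_at_hub:
  assumes w: "w \<in> H" "w \<notin> S" and u0: "u0 \<in> hub_children w"
  defines "\<P> \<equiv> insert (BP Ein V S w \<union> cmp w u0) (cmp w ` (hub_children w - {u0}))"
  shows "\<Union>\<P> = D w" and "\<forall>P\<in>\<P>. \<forall>P'\<in>\<P>. P \<noteq> P' \<longrightarrow> P \<inter> P' = {}"
proof -
  have wV: "w \<in> V" using w H_sub by auto
  show "\<Union>\<P> = D w" unfolding \<P>_def using desc_decomp[OF w] u0 by blast
  show "\<forall>P\<in>\<P>. \<forall>P'\<in>\<P>. P \<noteq> P' \<longrightarrow> P \<inter> P' = {}"
    unfolding \<P>_def
    using BP_disjoint_component_of_hub_child[OF wV] components_of_hub_children_disjoint[OF wV] u0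
    by blast
qed

end

lemma self_sufficient_Union:
  assumes ss: "\<forall>P\<in>\<P>. self_sufficient Vin Ein f T S P"
    and disj: "\<forall>P\<in>\<P>. \<forall>P'\<in>\<P>. P \<noteq> P' \<longrightarrow> P \<inter> P' = {}"
  shows "self_sufficient Vin Ein f T S (\<Union>\<P>)"
proof -
  let ?alloc = "\<lambda>P Q. (\<forall>s\<in>S \<inter> P. is_subtree Vin Ein (Q s) \<and> s \<in> Q s \<and> f (Q s) s \<le> ennreal T)
      \<and> (\<Union>s\<in>S \<inter> P. Q s) = P
      \<and> (\<forall>s\<in>S \<inter> P. \<forall>s'\<in>S \<inter> P. s \<noteq> s' \<longrightarrow> Q s \<inter> Q s' = {})"
  have "\<forall>P\<in>\<P>. \<exists>Q. ?alloc P Q" using ss by (simp add: self_sufficient_def)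
  then obtain QQ where QQ: "\<forall>P\<in>\<P>. ?alloc P (QQ P)" by metis
  define Q where "Q s = QQ (THE P. P \<in> \<P> \<and> s \<in> P) s" for s
  have Q_eq: "Q s = QQ P s" if "P \<in> \<P>" "s \<in> P" for P s
  proof -
    have "(THE P. P \<in> \<P> \<and> s \<in> P) = P" using that disj by (intro the_equality) auto
    then show ?thesis by (simp add: Q_def)
  qed
  have Q_sub: "Q s \<subseteq> P" if "P \<in> \<P>" "s \<in> P" "s \<in> S" for P s
    using Q_eq[OF that(1,2)] QQ that by blast
  show ?thesis unfolding self_sufficient_def
  proof (intro exI[of _ Q] conjI ballI impI)
    fix s assume "s \<in> S \<inter> \<Union>\<P>"
    then obtain P where "P \<in> \<P>" "s \<in> P" "s \<in> S" by blast
    then show "is_subtree Vin Ein (Q s)" "s \<in> Q s" "f (Q s) s \<le> ennreal T"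
      using QQ Q_eq by auto
  next
    show "(\<Union>s\<in>S \<inter> \<Union>\<P>. Q s) = \<Union>\<P>"
    proof (intro equalityI subsetI)
      fix x assume "x \<in> (\<Union>s\<in>S \<inter> \<Union>\<P>. Q s)"
      then show "x \<in> \<Union>\<P>" using Q_sub by blast
    next
      fix x assume "x \<in> \<Union>\<P>"
      then obtain P where P: "P \<in> \<P>" "x \<in> P" by blast
      then have "x \<in> (\<Union>s\<in>S \<inter> P. QQ P s)" using QQ by blast
      then obtain s where "s \<in> S \<inter> P" "x \<in> QQ P s" by blast
      then show "x \<in> (\<Union>s\<in>S \<inter> \<Union>\<P>. Q s)" using Q_eq[OF P(1)] P by blast
    qed
  next
    fix s s' assume s: "s \<in> S \<inter> \<Union>\<P>" "s' \<in> S \<inter> \<Union>\<P>" "s \<noteq> s'"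
    then obtain P P' where P: "P \<in> \<P>" "s \<in> P" "P' \<in> \<P>" "s' \<in> P'" by blast
    show "Q s \<inter> Q s' = {}"
    proof (cases "P = P'")
      case True
      then show ?thesis using QQ P s Q_eq[OF P(1,2)] Q_eq[OF P(3,4)] by auto
    next
      case False
      then show ?thesis using disj P s Q_sub[OF P(1,2)] Q_sub[OF P(3,4)] by blast
    qed
  qed
qed

lemma self_sufficient_singleton_sink:
  assumes "minmax_monotone Vin Ein f" "T \<ge> 0" "s \<in> S" "s \<in> Vin"
  shows "self_sufficient Vin Ein f T S {s}"
proof -
  have "f {s} s = 0" using assms by (simp add: minmax_monotone_def)
  moreover have "is_subtree Vin Ein {s}" using assms by (auto simp: is_subtree_def connected_in_def)
  ultimately show ?thesis unfolding self_sufficient_def using assms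
    by (intro exI[of _ "\<lambda>_. {s}"]) auto
qed

context rooted_sink_tree
begin

lemma hub_desc_self_sufficient_if_no_reaching_criterion:
  assumes mm: "minmax_monotone Vin Ein f" and T_nonneg: "\<T> \<ge> 0"
    and no_rc: "\<not> (\<exists>u v. reaching_criterion Vin Ein f \<T> V S r u v)"
    and w: "w \<in> H"
  shows "self_sufficient Vin Ein f \<T> S (D w)"
  using w
proof (induction w rule: measure_induct_rule[of "\<lambda>w. card (D w)"])
  case (less w)
  let ?ss = "self_sufficient Vin Ein f \<T> S"
  show ?case
  proof (cases "w \<in> S")
    case True
    then show ?thesis
      using desc_sink self_sufficient_singleton_sink[OF mm T_nonneg] S_sub V_sub by auto
  next
    case False
    have wV: "w \<in> V" using less.prems H_sub by auto
    obtain u0 where u0: "u0 \<in> hub_children w" using hub_children_nonempty[OF less.prems False] by blast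
    have ss_child: "?ss (cmp w u)" if u: "u \<in> hub_children w" for u
    proof -
      have "D u \<subseteq> D w - {w}"
        using component_of_hub_child_subset[OF wV u] component_of_hub_child[OF wV u] by simp
      moreover have "w \<in> D w" using desc_iff[OF wV] wV by simp
      ultimately have "D u \<subset> D w" by blast
      moreover have "finite (D w)" using finite_V by (simp add: desc_def)
      ultimately have "card (D u) < card (D w)" by (rule psubset_card_mono[rotated])
      then show ?thesis using less.IH hub_childD(3)[OF wV u] component_of_hub_child[OF wV u] by simp
    qed
    have "?ss (BP Ein V S w \<union> cmp w u0)"
      using no_rc ss_child[OF u0] hub_child_parent[OF u0 wV] hub_childD(3)[OF wV u0] less.prems
      by (auto simp: reaching_criterion_def)
    then have "\<forall>P \<in> insert (BP Ein V S w \<union> cmp w u0) (cmp w ` (hub_children w - {u0})). ?ss P"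
      using ss_child by blast
    then show ?thesis
      using self_sufficient_Union desc_partition_at_hub[OF less.prems False u0] by metis
  qed
qed

end

theorem corollary3:
  fixes Vin :: "'v set" and Ein :: "('v \<times> 'v) set"
    and f :: "'v set \<Rightarrow> 'v \<Rightarrow> ennreal" and \<T> :: real
    and V S :: "'v set" and r :: 'v
  assumes tree: "is_tree Vin Ein"
    and mm: "minmax_monotone Vin Ein f"
    and T_nonneg: "\<T> \<ge> 0"
    and sub: "is_subtree Vin Ein V"
    and leaves: "\<forall>s\<in>S. is_leaf Ein V s"
    and S2: "card S \<ge> 2"
    and V3: "card V > 2"
    and root: "valid_root Ein V S r"
    and viable: "RC_viable Ein f \<T> V S"
  shows "(\<exists>u v. reaching_criterion Vin Ein f \<T> V S r u v)
       \<or> (rec_self_sufficient Vin Ein f \<T> V S r r \<and> self_sufficient Vin Ein f \<T> S V)"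
proof -
  interpret rooted_sink_tree Vin Ein V S r
    using tree sub leaves root by unfold_locales
  have "rec_self_sufficient Vin Ein f \<T> V S r r \<and> self_sufficient Vin Ein f \<T> S V"
    if no_rc: "\<not> (\<exists>u v. reaching_criterion Vin Ein f \<T> V S r u v)"
  proof
    note hub_ss = hub_desc_self_sufficient_if_no_reaching_criterion[OF mm T_nonneg no_rc]
    show "rec_self_sufficient Vin Ein f \<T> V S r r"
      using hub_ss by (simp add: rec_self_sufficient_def)
    show "self_sufficient Vin Ein f \<T> S V"
      using hub_ss[OF root_hub] by (simp only: desc_root)
  qed
  then show ?thesis by blast
qed

end
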